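(* Let $m$ be an element of the monoid $M$. Then $m$ is the skeleton of some finite $(3+1)$-free poset if and only if (i) every representative $w\in\Sigma^*$ of $m$ starts with the letter $c_1$ or $t_{12}$, and (ii) no representative $w\in\Sigma^*$ of $m$ contains a factor (consecutive pair of letters) of the form $c_ic_i$ for some $i\ge1$.
   Context: A poset $P$ is $(3+1)$-free if there are no $a,b,c,d\in P$ with $a<b<c$ and $d$ incomparable to each of $a,b,c$. For $a\in P$ let $D_a=\{x\in P:x<a\}$, $U_a=\{x\in P:x>a\}$. Write $a\mathrel{\top}b$ if neither of $D_a,D_b$ contains the other, $a\mathrel{\bot}b$ if neither of $U_a,U_b$ contains the other, and $a\approx b$ if $D_a=D_b$ and $U_a=U_b$. A top of a tangle is a subset $A\subseteq P$ with $|A|\ge2$ that is a connected component of the graph on $P$ with edges $\{a,b\}$ for $a\mathrel{\top}b$; a bottom of a tangle is defined likewise using $\bot$. A top $A$ and bottom $B$ are matched if there are distinct $a_1,a_2\in A$, $b_1,b_2\in B$ with $b_1<a_1$, $b_2<a_2$ and the pairs $\{a_1,a_2\},\{b_1,b_2\},\{b_1,a_2\},\{b_2,a_1\}$ incomparable; in a $(3+1)$-free poset this is a perfect matching. A tangle is a matched pair $(A,B)$, identified with $A\cup B$; a clone set is an equivalence class of $\approx$ on the vertices in no tangle; clone sets and tangles are the parts of $P$. Levels: $L_1$ = minimal elements of $P$, $L_{k+1}$ = minimal elements of $P\setminus(L_1\cup\dots\cup L_k)$, $\ell(a)=k$ if $a\in L_k$; each clone set lies in one level, each tangle in $L_i\cup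 L_{i+1}$ for some $i$. A compatible listing is an ordering $(X_1,\dots,X_m)$ of all parts such that for $a\in X_i$, $b\in X_j$, $i\ne j$: $a<b$ iff $\ell(a)\le\ell(b)-2$, or $\ell(a)=\ell(b)-1$ and $i<j$ (compatible listings exist). Let $\Sigma=\{c_1,c_2,\dots\}\cup\{t_{12},t_{23},\dots,t_{i\,i+1},\dots\}$, $\Sigma^*$ the free monoid on $\Sigma$, and $M$ the quotient of $\Sigma^*$ by the commutation relations $c_ic_j=c_jc_i$ if $|i-j|\ge2$; $c_it_{j\,j+1}=t_{j\,j+1}c_i$ if $i\le j-2$ or $i\ge j+3$; $t_{i\,i+1}t_{j\,j+1}=t_{j\,j+1}t_{i\,i+1}$ if $|i-j|\ge3$. A representative of $m\in M$ is a word in $\Sigma^*$ mapping to $m$. The word of a compatible listing replaces each clone set at level $i$ by $c_i$ and each tangle in levels $\{i,i+1\}$ by $t_{i\,i+1}$; all compatible listings of $P$ give words with the same image in $M$, the skeleton of $P$. *)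

theory Defs
  imports Main
begin

definition finite_poset :: "nat set \<Rightarrow> (nat \<Rightarrow> nat \<Rightarrow> bool) \<Rightarrow> bool" where
  "finite_poset P lt \<longleftrightarrow> finite P \<and> (\<forall>a\<in>P. \<not> lt a a)
     \<and> (\<forall>a\<in>P. \<forall>b\<in>P. \<forall>c\<in>P. lt a b \<and> lt b c \<longrightarrow> lt a c)"

definition incomp :: "(nat \<Rightarrow> nat \<Rightarrow> bool) \<Rightarrow> nat \<Rightarrow> nat \<Rightarrow> bool" where
  "incomp lt a b \<longleftrightarrow> a \<noteq> b \<and> \<not> lt a b \<and> \<not> lt b a"

definition free31 :: "nat set \<Rightarrow> (nat \<Rightarrow> nat \<Rightarrow> bool) \<Rightarrow> bool" where
  "free31 P lt \<longleftrightarrow> \<not> (\<exists>a\<in>P. \<exists>b\<in>P. \<exists>c\<in>P. \<exists>d\<in>P. lt a b \<and> lt b c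
       \<and> incomp lt d a \<and> incomp lt d b \<and> incomp lt d c)"

definition down_set :: "nat set \<Rightarrow> (nat \<Rightarrow> nat \<Rightarrow> bool) \<Rightarrow> nat \<Rightarrow> nat set" where
  "down_set P lt a = {x\<in>P. lt x a}"

definition up_set :: "nat set \<Rightarrow> (nat \<Rightarrow> nat \<Rightarrow> bool) \<Rightarrow> nat \<Rightarrow> nat set" where
  "up_set P lt a = {x\<in>P. lt a x}"

definition top_rel :: "nat set \<Rightarrow> (nat \<Rightarrow> nat \<Rightarrow> bool) \<Rightarrow> nat \<Rightarrow> nat \<Rightarrow> bool" where
  "top_rel P lt a b \<longleftrightarrow> \<not> down_set P lt a \<subseteq> down_set P lt b \<and> \<not> down_set P lt b \<subseteq> down_set P lt a"

definition bot_rel :: "nat set \<Rightarrow> (nat \<Rightarrow> nat \<Rightarrow> bool) \<Rightarrow> nat \<Rightarrow> nat \<Rightarrow> bool" where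
  "bot_rel P lt a b \<longleftrightarrow> \<not> up_set P lt a \<subseteq> up_set P lt b \<and> \<not> up_set P lt b \<subseteq> up_set P lt a"

definition clone_rel :: "nat set \<Rightarrow> (nat \<Rightarrow> nat \<Rightarrow> bool) \<Rightarrow> nat \<Rightarrow> nat \<Rightarrow> bool" where
  "clone_rel P lt a b \<longleftrightarrow> down_set P lt a = down_set P lt b \<and> up_set P lt a = up_set P lt b"

definition component :: "nat set \<Rightarrow> (nat \<Rightarrow> nat \<Rightarrow> bool) \<Rightarrow> nat \<Rightarrow> nat set" where
  "component P E a = {b\<in>P. (\<lambda>x y. x \<in> P \<and> y \<in> P \<and> E x y)\<^sup>*\<^sup>* a b}"

definition is_top :: "nat set \<Rightarrow> (nat \<Rightarrow> nat \<Rightarrow> bool) \<Rightarrow> nat set \<Rightarrow> bool" where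
  "is_top P lt A \<longleftrightarrow> card A \<ge> 2 \<and> (\<exists>a\<in>P. A = component P (top_rel P lt) a)"

definition is_bottom :: "nat set \<Rightarrow> (nat \<Rightarrow> nat \<Rightarrow> bool) \<Rightarrow> nat set \<Rightarrow> bool" where
  "is_bottom P lt B \<longleftrightarrow> card B \<ge> 2 \<and> (\<exists>b\<in>P. B = component P (bot_rel P lt) b)"

definition matched :: "(nat \<Rightarrow> nat \<Rightarrow> bool) \<Rightarrow> nat set \<Rightarrow> nat set \<Rightarrow> bool" where
  "matched lt A B \<longleftrightarrow> (\<exists>a1\<in>A. \<exists>a2\<in>A. \<exists>b1\<in>B. \<exists>b2\<in>B. a1 \<noteq> a2 \<and> b1 \<noteq> b2
     \<and> lt b1 a1 \<and> lt b2 a2 \<and> incomp lt a1 a2 \<and> incomp lt b1 b2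
     \<and> incomp lt b1 a2 \<and> incomp lt b2 a1)"

definition tangles :: "nat set \<Rightarrow> (nat \<Rightarrow> nat \<Rightarrow> bool) \<Rightarrow> nat set set" where
  "tangles P lt = {A \<union> B | A B. is_top P lt A \<and> is_bottom P lt B \<and> matched lt A B}"

definition in_tangle :: "nat set \<Rightarrow> (nat \<Rightarrow> nat \<Rightarrow> bool) \<Rightarrow> nat \<Rightarrow> bool" where
  "in_tangle P lt x \<longleftrightarrow> (\<exists>T\<in>tangles P lt. x \<in> T)"

definition clone_sets :: "nat set \<Rightarrow> (nat \<Rightarrow> nat \<Rightarrow> bool) \<Rightarrow> nat set set" where
  "clone_sets P lt = {{y\<in>P. \<not> in_tangle P lt y \<and> clone_rel P lt x y} | x. x \<in> P \<and> \<not> in_tangle P lt x}"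

definition parts :: "nat set \<Rightarrow> (nat \<Rightarrow> nat \<Rightarrow> bool) \<Rightarrow> nat set set" where
  "parts P lt = tangles P lt \<union> clone_sets P lt"

definition minimal_elems :: "nat set \<Rightarrow> (nat \<Rightarrow> nat \<Rightarrow> bool) \<Rightarrow> nat set" where
  "minimal_elems S lt = {x\<in>S. \<not> (\<exists>y\<in>S. lt y x)}"

text \<open>levels_upto P lt k = L_1 \<union> ... \<union> L_k\<close>
primrec levels_upto :: "nat set \<Rightarrow> (nat \<Rightarrow> nat \<Rightarrow> bool) \<Rightarrow> nat \<Rightarrow> nat set" where
  "levels_upto P lt 0 = {}"
| "levels_upto P lt (Suc k) = levels_upto P lt k \<union> minimal_elems (P - levels_upto P lt k) lt"

definition level :: "nat set \<Rightarrow> (nat \<Rightarrow> nat \<Rightarrow> bool) \<Rightarrow> nat \<Rightarrow> nat" where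
  "level P lt a = (LEAST k. a \<in> levels_upto P lt k)"

text \<open>C i is c_i, T i is t_{i,i+1}; only indices i \<ge> 1 belong to the alphabet.\<close>
datatype letter = C nat | T nat

definition valid_letter :: "letter \<Rightarrow> bool" where
  "valid_letter x = (case x of C i \<Rightarrow> 1 \<le> i | T i \<Rightarrow> 1 \<le> i)"

definition valid_word :: "letter list \<Rightarrow> bool" where
  "valid_word w \<longleftrightarrow> (\<forall>x\<in>set w. valid_letter x)"

fun commutes :: "letter \<Rightarrow> letter \<Rightarrow> bool" where
  "commutes (C i) (C j) = (i + 2 \<le> j \<or> j + 2 \<le> i)"
| "commutes (C i) (T j) = (i + 2 \<le> j \<or> j + 3 \<le> i)"
| "commutes (T j) (C i) = (i + 2 \<le> j \<or> j + 3 \<le> i)"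
| "commutes (T i) (T j) = (i + 3 \<le> j \<or> j + 3 \<le> i)"

definition swap_step :: "letter list \<Rightarrow> letter list \<Rightarrow> bool" where
  "swap_step w v \<longleftrightarrow> (\<exists>u z x y. w = u @ [x, y] @ z \<and> v = u @ [y, x] @ z \<and> commutes x y)"

text \<open>The element of M represented by a word: its equivalence class of words.\<close>
definition trace_class :: "letter list \<Rightarrow> letter list set" where
  "trace_class w = {v. valid_word v \<and> swap_step\<^sup>*\<^sup>* w v}"

definition monoid_M :: "letter list set set" where
  "monoid_M = {trace_class w | w. valid_word w}"

definition part_letter :: "nat set \<Rightarrow> (nat \<Rightarrow> nat \<Rightarrow> bool) \<Rightarrow> nat set \<Rightarrow> letter" where
  "part_letter P lt X = (if X \<in> tangles P lt then T (Min (level P lt ` X))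
                         else C (Min (level P lt ` X)))"

definition compatible_listing :: "nat set \<Rightarrow> (nat \<Rightarrow> nat \<Rightarrow> bool) \<Rightarrow> nat set list \<Rightarrow> bool" where
  "compatible_listing P lt Xs \<longleftrightarrow> distinct Xs \<and> set Xs = parts P lt \<and>
     (\<forall>i<length Xs. \<forall>j<length Xs. i \<noteq> j \<longrightarrow> (\<forall>a\<in>Xs ! i. \<forall>b\<in>Xs ! j.
        lt a b \<longleftrightarrow> (level P lt a + 2 \<le> level P lt b
                    \<or> (level P lt a + 1 = level P lt b \<and> i < j))))"

definition listing_word :: "nat set \<Rightarrow> (nat \<Rightarrow> nat \<Rightarrow> bool) \<Rightarrow> nat set list \<Rightarrow> letter list" where
  "listing_word P lt Xs = map (part_letter P lt) Xs"

text \<open>m is the skeleton of P: the image in M of the word of a compatible listing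
(all compatible listings give the same image).\<close>
definition is_skeleton :: "nat set \<Rightarrow> (nat \<Rightarrow> nat \<Rightarrow> bool) \<Rightarrow> letter list set \<Rightarrow> bool" where
  "is_skeleton P lt m \<longleftrightarrow> (\<exists>Xs. compatible_listing P lt Xs \<and> trace_class (listing_word P lt Xs) = m)"

end

theory Submission
  imports Defs
begin

text \<open>In a finite \<open>(3+1)\<close>-free poset an element two levels below another is below it, so the
  order is determined by the levels together with, between adjacent levels, the order of the
  parts in a compatible listing. Adjacent parts carrying commuting letters lie on levels at
  least two apart and may be swapped in a listing; hence every representative of the skeleton
  is the word of a compatible listing. Its first part reaches level 1, and two adjacent parts
  \<open>c\<^sub>i c\<^sub>i\<close> would consist of mutual clones, i.e.\ form a single clone set.

  Conversely, a word yields a poset with one element for each \<open>c\<^sub>i\<close> and four for each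
  \<open>t\<^sub>i\<^sub>,\<^sub>i\<^sub>+\<^sub>1\<close>, ordered as a compatible listing of the word prescribes. If
  every representative starts with \<open>c\<^sub>1\<close> or \<open>t\<^sub>1\<^sub>2\<close>, every letter is supported by an
  earlier letter one level down, so the levels of the poset are the ones read off the letters;
  if no representative contains \<open>c\<^sub>i c\<^sub>i\<close>, two occurrences of \<open>c\<^sub>i\<close> are separated by a
  letter on an adjacent level, so they stay distinct clone sets. The word is then the word of a
  compatible listing of its poset.\<close>

section \<open>Levels of a finite poset\<close>

locale fin_poset =
  fixes P :: "nat set" and lt :: "nat \<Rightarrow> nat \<Rightarrow> bool"
  assumes finite_poset: "finite_poset P lt"
begin

lemma finite_carrier: "finite P"
  using finite_poset by (simp add: finite_poset_def)

lemma irrefl: "a \<in> P \<Longrightarrow> \<not> lt a a"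
  using finite_poset by (simp add: finite_poset_def)

lemma trans_less: "a \<in> P \<Longrightarrow> b \<in> P \<Longrightarrow> c \<in> P \<Longrightarrow> lt a b \<Longrightarrow> lt b c \<Longrightarrow> lt a c"
  using finite_poset unfolding finite_poset_def by blast

lemma levels_upto_mono: "k \<le> k' \<Longrightarrow> levels_upto P lt k \<subseteq> levels_upto P lt k'"
  by (induction k') (auto simp: le_Suc_eq)

lemma mem_levels_upto_card_down_set:
  "a \<in> P \<Longrightarrow> a \<in> levels_upto P lt (Suc (card (down_set P lt a)))"
proof (induction "card (down_set P lt a)" arbitrary: a rule: less_induct)
  case less
  have "q \<in> levels_upto P lt (card (down_set P lt a))" if q: "q \<in> P" "lt q a" for q
  proof -
    have "down_set P lt q \<subset> down_set P lt a"
      using q less.prems irrefl by (auto simp: down_set_def intro: trans_less)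
    moreover have "finite (down_set P lt a)"
      using finite_carrier by (simp add: down_set_def)
    ultimately have smaller: "card (down_set P lt q) < card (down_set P lt a)"
      by (simp add: psubset_card_mono)
    then have "Suc (card (down_set P lt q)) \<le> card (down_set P lt a)"
      by simp
    then show ?thesis
      using less.hyps[OF smaller q(1)] levels_upto_mono by blast
  qed
  then show ?case
    using less.prems by (auto simp: minimal_elems_def)
qed

lemma mem_levels_upto_iff: "a \<in> P \<Longrightarrow> a \<in> levels_upto P lt k \<longleftrightarrow> level P lt a \<le> k"
proof
  assume "a \<in> levels_upto P lt k"
  then show "level P lt a \<le> k"
    unfolding level_def by (rule Least_le)
next
  assume a: "a \<in> P" and le: "level P lt a \<le> k"
  have "a \<in> levels_upto P lt (level P lt a)"
    unfolding level_def using mem_levels_upto_card_down_set[OF a] by (rule LeastI)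
  then show "a \<in> levels_upto P lt k"
    using levels_upto_mono[OF le] by blast
qed

lemma level_ge_1: "a \<in> P \<Longrightarrow> 1 \<le> level P lt a"
  using mem_levels_upto_iff[of a 0] by (cases "level P lt a") auto

lemma level_less_level:
  assumes "a \<in> P" "b \<in> P" "lt a b"
  shows "level P lt a < level P lt b"
proof -
  obtain k where k: "level P lt b = Suc k"
    using level_ge_1[OF assms(2)] by (cases "level P lt b") auto
  then have "b \<in> minimal_elems (P - levels_upto P lt k) lt"
    using mem_levels_upto_iff[OF assms(2), of k] mem_levels_upto_iff[OF assms(2), of "Suc k"] by auto
  then have "a \<in> levels_upto P lt k"
    using assms by (auto simp: minimal_elems_def)
  then show ?thesis
    using mem_levels_upto_iff[OF assms(1)] k by simp
qed

lemma level_predecessor: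
  assumes "a \<in> P" "2 \<le> level P lt a"
  obtains q where "q \<in> P" "lt q a" "Suc (level P lt q) = level P lt a"
proof -
  obtain k where k: "level P lt a = Suc (Suc k)"
    using assms(2) by (metis add_2_eq_Suc le_Suc_ex)
  then have "a \<notin> minimal_elems (P - levels_upto P lt k) lt" "a \<notin> levels_upto P lt k"
    using mem_levels_upto_iff[OF assms(1), of "Suc k"] by auto
  then obtain q where q: "q \<in> P" "q \<notin> levels_upto P lt k" "lt q a"
    using assms(1) by (auto simp: minimal_elems_def)
  then have "k < level P lt q" "level P lt q < level P lt a"
    using mem_levels_upto_iff level_less_level assms(1) by auto
  then show ?thesis
    using that q k by simp
qed

lemma level_eqI:
  assumes mono: "\<And>x y. x \<in> P \<Longrightarrow> y \<in> P \<Longrightarrow> lt x y \<Longrightarrow> L x < L y"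
    and pred: "\<And>x. x \<in> P \<Longrightarrow> 2 \<le> L x \<Longrightarrow> \<exists>q\<in>P. lt q x \<and> Suc (L q) = L x"
    and pos: "\<And>x. x \<in> P \<Longrightarrow> 1 \<le> L x"
    and x: "x \<in> P"
  shows "level P lt x = L x"
proof -
  have levels: "levels_upto P lt k = {a\<in>P. L a \<le> k}" for k
  proof (induction k)
    case 0
    then show ?case using pos by fastforce
  next
    case (Suc k)
    have "minimal_elems (P - levels_upto P lt k) lt = {a\<in>P. L a = Suc k}"
    proof (intro equalityI subsetI)
      fix z assume "z \<in> minimal_elems (P - levels_upto P lt k) lt"
      then have z: "z \<in> P" "k < L z" and no_below: "\<not> (\<exists>y\<in>P - levels_upto P lt k. lt y z)"
        using Suc by (auto simp: minimal_elems_def)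
      show "z \<in> {a\<in>P. L a = Suc k}"
      proof (rule ccontr)
        assume "z \<notin> {a\<in>P. L a = Suc k}"
        then have "Suc k < L z"
          using z by auto
        moreover obtain q where "q \<in> P" "lt q z" "Suc (L q) = L z"
          using pred z calculation by fastforce
        ultimately show False using no_below Suc by auto
      qed
    next
      fix z assume "z \<in> {a\<in>P. L a = Suc k}"
      then show "z \<in> minimal_elems (P - levels_upto P lt k) lt"
        using mono Suc by (fastforce simp: minimal_elems_def)
    qed
    then show ?case using Suc by auto
  qed
  show ?thesis
    unfolding level_def levels using x by (intro Least_equality) auto
qed

lemma level_eq_if_down_set_eq:
  assumes "a \<in> P" "b \<in> P" "down_set P lt a = down_set P lt b"
  shows "level P lt a = level P lt b"
proof -
  have "level P lt a \<le> level P lt b"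
    if "a \<in> P" "b \<in> P" "down_set P lt a = down_set P lt b" for a b
  proof (cases "2 \<le> level P lt a")
    case True
    with \<open>a \<in> P\<close> obtain q where "q \<in> P" "lt q a" "Suc (level P lt q) = level P lt a"
      by (rule level_predecessor)
    moreover from this have "lt q b"
      using that by (auto simp: down_set_def)
    ultimately show ?thesis
      using level_less_level[of q b] that by fastforce
  next
    case False
    then show ?thesis using level_ge_1 that by fastforce
  qed
  then show ?thesis
    using assms by (metis le_antisym)
qed

end

locale free31_poset = fin_poset +
  assumes free31: "free31 P lt"
begin

lemma no_3_plus_1:
  "a \<in> P \<Longrightarrow> b \<in> P \<Longrightarrow> c \<in> P \<Longrightarrow> d \<in> P \<Longrightarrow> lt a b \<Longrightarrow> lt b c
    \<Longrightarrow> incomp lt d a \<Longrightarrow> incomp lt d b \<Longrightarrow> incomp lt d c \<Longrightarrow> False"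
  using free31 unfolding free31_def by blast

text \<open>An element two levels below another is below it: otherwise it would be incomparable to
  the whole chain \<open>u < v < b\<close> obtained by descending one level at a time from \<open>b\<close>.\<close>

lemma less_if_level_add_2_le:
  assumes "a \<in> P" "b \<in> P" "level P lt a + 2 \<le> level P lt b"
  shows "lt a b"
proof (rule ccontr)
  assume not_ab: "\<not> lt a b"
  have "2 \<le> level P lt b"
    using assms level_ge_1 by fastforce
  with assms(2) obtain v where v: "v \<in> P" "lt v b" "Suc (level P lt v) = level P lt b"
    by (rule level_predecessor)
  have "2 \<le> level P lt v"
    using v assms level_ge_1[OF assms(1)] by linarith
  with v(1) obtain u where u: "u \<in> P" "lt u v" "Suc (level P lt u) = level P lt v"
    by (rule level_predecessor)
  have "\<not> lt a v" "\<not> lt a u" "a \<noteq> u" "a \<noteq> v"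
    using u v not_ab trans_less assms by blast+
  moreover have "\<not> lt u a" "\<not> lt v a" "\<not> lt b a" "a \<noteq> b"
    using level_less_level u v assms by fastforce+
  ultimately show False
    using no_3_plus_1[of u v b a] u v assms not_ab unfolding incomp_def by blast
qed

lemma level_eq_if_top_rel:
  assumes "a \<in> P" "b \<in> P" "top_rel P lt a b"
  shows "level P lt a = level P lt b"
proof -
  have "\<not> level P lt a < level P lt b" if ab: "a \<in> P" "b \<in> P" "top_rel P lt a b" for a b
  proof
    assume less: "level P lt a < level P lt b"
    obtain d where d: "d \<in> P" "lt d a" "\<not> lt d b"
      using ab(3) by (auto simp: top_rel_def down_set_def)
    have "level P lt d + 2 \<le> level P lt b"
      using level_less_level[OF d(1) ab(1) d(2)] less by simp
    then show False
      using less_if_level_add_2_le d ab by blast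
  qed
  moreover have "top_rel P lt b a"
    using assms(3) by (auto simp: top_rel_def)
  ultimately show ?thesis
    using assms by (meson linorder_neqE_nat)
qed

lemma level_eq_if_bot_rel:
  assumes "a \<in> P" "b \<in> P" "bot_rel P lt a b"
  shows "level P lt a = level P lt b"
proof -
  have "\<not> level P lt a < level P lt b" if ab: "a \<in> P" "b \<in> P" "bot_rel P lt a b" for a b
  proof
    assume less: "level P lt a < level P lt b"
    obtain u where u: "u \<in> P" "lt b u" "\<not> lt a u"
      using ab(3) by (auto simp: bot_rel_def up_set_def)
    have "level P lt a + 2 \<le> level P lt u"
      using level_less_level[OF ab(2) u(1) u(2)] less by simp
    then show False
      using less_if_level_add_2_le u ab by blast
  qed
  moreover have "bot_rel P lt b a"
    using assms(3) by (auto simp: bot_rel_def)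
  ultimately show ?thesis
    using assms by (meson linorder_neqE_nat)
qed

end

section \<open>Parts and compatible listings\<close>

fun letter_low :: "letter \<Rightarrow> nat" where
  "letter_low (C i) = i"
| "letter_low (T i) = i"

fun letter_high :: "letter \<Rightarrow> nat" where
  "letter_high (C i) = i"
| "letter_high (T i) = Suc i"

definition letter_spans :: "letter \<Rightarrow> nat \<Rightarrow> bool" where
  "letter_spans x v \<longleftrightarrow> letter_low x \<le> v \<and> v \<le> letter_high x"

lemma commutes_iff_apart:
  "commutes x y \<longleftrightarrow> letter_high x + 2 \<le> letter_low y \<or> letter_high y + 2 \<le> letter_low x"
  by (cases x; cases y) auto

lemma letter_low_part_letter: "letter_low (part_letter P lt X) = Min (level P lt ` X)"
  by (simp add: part_letter_def)

lemma component_subset: "component P E a \<subseteq> P"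
  by (auto simp: component_def)

lemma component_invariant:
  assumes "b \<in> component P E a"
    and "\<And>x y. x \<in> P \<Longrightarrow> y \<in> P \<Longrightarrow> E x y \<Longrightarrow> f x = f y"
  shows "f b = f a"
proof -
  have "(\<lambda>x y. x \<in> P \<and> y \<in> P \<and> E x y)\<^sup>*\<^sup>* a b"
    using assms(1) by (auto simp: component_def)
  then show ?thesis
    by (induction rule: rtranclp_induct) (auto dest: assms(2))
qed

lemma component_subset_singleton:
  "(\<And>y. y \<in> P \<Longrightarrow> \<not> E a y) \<Longrightarrow> component P E a \<subseteq> {a}"
  by (auto simp: component_def elim: converse_rtranclpE)

lemma component_eq_pairI:
  assumes "component P E a \<subseteq> {a, b}" "a \<in> P" "b \<in> P" "E a b"
  shows "component P E a = {a, b}"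
  using assms unfolding component_def by (auto intro: r_into_rtranclp)

context free31_poset
begin

lemma tangle_levels:
  assumes "X \<in> tangles P lt"
  obtains \<beta> where "X \<subseteq> P" "\<forall>x\<in>X. level P lt x \<in> {\<beta>, Suc \<beta>}" "\<beta> \<in> level P lt ` X"
proof -
  obtain A B where X: "X = A \<union> B" and A: "is_top P lt A" and B: "is_bottom P lt B"
    and matched: "matched lt A B"
    using assms by (auto simp: tangles_def)
  obtain a0 where a0: "a0 \<in> P" "A = component P (top_rel P lt) a0"
    using A by (auto simp: is_top_def)
  obtain b0 where b0: "b0 \<in> P" "B = component P (bot_rel P lt) b0"
    using B by (auto simp: is_bottom_def)
  have level_A: "level P lt x = level P lt a0" if "x \<in> A" for x
    using component_invariant[of x P "top_rel P lt" a0] that a0 level_eq_if_top_rel by blast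
  have level_B: "level P lt x = level P lt b0" if "x \<in> B" for x
    using component_invariant[of x P "bot_rel P lt" b0] that b0 level_eq_if_bot_rel by blast
  have sub: "A \<subseteq> P" "B \<subseteq> P"
    using a0 b0 component_subset by blast+
  obtain a1 a2 b1 where w: "a1 \<in> A" "a2 \<in> A" "b1 \<in> B" "lt b1 a1" "incomp lt b1 a2"
    using matched unfolding matched_def by blast
  have "level P lt b1 < level P lt a1"
    using level_less_level w sub by blast
  moreover have "\<not> level P lt b1 + 2 \<le> level P lt a2"
    using less_if_level_add_2_le[of b1 a2] w sub by (auto simp: incomp_def)
  ultimately have "level P lt a0 = Suc (level P lt b0)"
    using level_A level_B w by fastforce
  then have "\<forall>x\<in>X. level P lt x \<in> {level P lt b0, Suc (level P lt b0)}"
    using X level_A level_B by auto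
  moreover have "level P lt b0 \<in> level P lt ` X"
    using X level_B w(3) by (metis UnI2 image_eqI)
  ultimately show ?thesis
    using that X sub by blast
qed

lemma clone_set_facts:
  assumes "X \<in> clone_sets P lt"
  shows clone_set_subset: "X \<subseteq> P"
    and clone_set_not_empty: "X \<noteq> {}"
    and clone_set_level: "a \<in> X \<Longrightarrow> b \<in> X \<Longrightarrow> level P lt a = level P lt b"
    and clone_set_eq: "a \<in> X \<Longrightarrow> X = {y\<in>P. \<not> in_tangle P lt y \<and> clone_rel P lt a y}"
proof -
  obtain x where x: "x \<in> P" "\<not> in_tangle P lt x"
    and X: "X = {y\<in>P. \<not> in_tangle P lt y \<and> clone_rel P lt x y}"
    using assms by (auto simp: clone_sets_def)
  have "x \<in> X"
    using x X by (simp add: clone_rel_def)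
  then show "X \<noteq> {}"
    by blast
  show "X \<subseteq> P"
    using X by blast
  have "level P lt a = level P lt x" if "a \<in> X" for a
    using level_eq_if_down_set_eq[of a x] that x X by (auto simp: clone_rel_def)
  then show "a \<in> X \<Longrightarrow> b \<in> X \<Longrightarrow> level P lt a = level P lt b"
    by metis
  show "X = {y\<in>P. \<not> in_tangle P lt y \<and> clone_rel P lt a y}" if "a \<in> X"
    using that X by (auto simp: clone_rel_def)
qed

lemma part_facts:
  assumes "X \<in> parts P lt"
  shows part_subset: "X \<subseteq> P"
    and part_not_empty: "X \<noteq> {}"
    and part_letter_spans_level: "a \<in> X \<Longrightarrow> letter_spans (part_letter P lt X) (level P lt a)"
proof -
  have "X \<subseteq> P \<and> X \<noteq> {} \<and> (\<forall>a\<in>X. letter_spans (part_letter P lt X) (level P lt a))"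
  proof (cases "X \<in> tangles P lt")
    case True
    then obtain \<beta> where \<beta>: "X \<subseteq> P" "\<forall>x\<in>X. level P lt x \<in> {\<beta>, Suc \<beta>}" "\<beta> \<in> level P lt ` X"
      by (rule tangle_levels)
    have "finite X"
      using \<beta>(1) finite_carrier finite_subset by blast
    moreover have "\<beta> \<le> y" if "y \<in> level P lt ` X" for y
      using that \<beta>(2) by auto
    ultimately have "Min (level P lt ` X) = \<beta>"
      using \<beta>(3) by (intro Min_eqI) simp_all
    then have "part_letter P lt X = T \<beta>"
      using True by (simp add: part_letter_def)
    moreover have "X \<noteq> {}"
      using \<beta>(3) by blast
    ultimately show ?thesis
      using \<beta>(1,2) by (auto simp: letter_spans_def)
  next
    case False
    then have X: "X \<in> clone_sets P lt"
      using assms by (simp add: parts_def)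
    then obtain x where x: "x \<in> X"
      using clone_set_not_empty by blast
    have "finite X"
      using clone_set_subset[OF X] finite_carrier finite_subset by blast
    moreover have "level P lt x \<le> y" if "y \<in> level P lt ` X" for y
      using that clone_set_level[OF X _ x] by auto
    ultimately have "Min (level P lt ` X) = level P lt x"
      using x by (intro Min_eqI) simp_all
    then have "part_letter P lt X = C (level P lt x)"
      using False by (simp add: part_letter_def)
    then show ?thesis
      using clone_set_level[OF X _ x] clone_set_subset[OF X] clone_set_not_empty[OF X]
      by (simp add: letter_spans_def)
  qed
  then show "X \<subseteq> P" "X \<noteq> {}" "a \<in> X \<Longrightarrow> letter_spans (part_letter P lt X) (level P lt a)"
    by blast+
qed

lemma part_letter_low_attained:
  assumes "X \<in> parts P lt"
  obtains a where "a \<in> X" "level P lt a = letter_low (part_letter P lt X)"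
proof -
  have "finite X"
    using part_subset[OF assms] finite_carrier finite_subset by blast
  then have "Min (level P lt ` X) \<in> level P lt ` X"
    using part_not_empty[OF assms] by (intro Min_in) auto
  then show ?thesis
    using that by (auto simp: letter_low_part_letter)
qed

lemma parts_cover:
  assumes "x \<in> P"
  obtains X where "X \<in> parts P lt" "x \<in> X"
proof (cases "in_tangle P lt x")
  case True
  then show ?thesis
    using that unfolding in_tangle_def parts_def by blast
next
  case False
  define X where "X = {y\<in>P. \<not> in_tangle P lt y \<and> clone_rel P lt x y}"
  have "X \<in> clone_sets P lt" "x \<in> X"
    unfolding clone_sets_def X_def using assms False by (auto simp: clone_rel_def)
  then show ?thesis
    using that unfolding parts_def by blast
qed

lemma clone_sets_eq_if_clone_rel:
  assumes "X \<in> clone_sets P lt" "Y \<in> clone_sets P lt" "a \<in> X" "b \<in> Y" "clone_rel P lt a b"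
  shows "X = Y"
proof -
  have "clone_rel P lt a y = clone_rel P lt b y" for y
    using assms(5) by (auto simp: clone_rel_def)
  then show ?thesis
    using clone_set_eq[OF assms(1,3)] clone_set_eq[OF assms(2,4)] by simp
qed

lemma compatible_listing_less_iff:
  assumes "compatible_listing P lt Ys" "i < length Ys" "j < length Ys" "i \<noteq> j"
    "a \<in> Ys ! i" "b \<in> Ys ! j"
  shows "lt a b \<longleftrightarrow> level P lt a + 2 \<le> level P lt b \<or> (level P lt a + 1 = level P lt b \<and> i < j)"
  using assms unfolding compatible_listing_def by blast

lemma compatible_listing_nth_part:
  "compatible_listing P lt Ys \<Longrightarrow> i < length Ys \<Longrightarrow> Ys ! i \<in> parts P lt"
  unfolding compatible_listing_def by (metis nth_mem)

lemma compatible_listing_covers: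
  assumes "compatible_listing P lt Ys" "x \<in> P"
  obtains j where "j < length Ys" "x \<in> Ys ! j"
proof -
  obtain X where "X \<in> parts P lt" "x \<in> X"
    using parts_cover[OF assms(2)] by blast
  then show ?thesis
    using assms(1) that unfolding compatible_listing_def by (metis in_set_conv_nth)
qed

text \<open>A minimal element of the first part lies on level 1: anything one level below it would
  have to be listed earlier.\<close>

lemma compatible_listing_first_letter:
  assumes cl: "compatible_listing P lt Ys" and "Ys \<noteq> []"
  shows "letter_low (part_letter P lt (Ys ! 0)) = 1"
proof (rule ccontr)
  assume not_1: "letter_low (part_letter P lt (Ys ! 0)) \<noteq> 1"
  have X: "Ys ! 0 \<in> parts P lt"
    using compatible_listing_nth_part cl assms(2) by auto
  obtain a where a: "a \<in> Ys ! 0" "level P lt a = letter_low (part_letter P lt (Ys ! 0))"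
    using part_letter_low_attained[OF X] by blast
  have "a \<in> P"
    using part_subset[OF X] a by blast
  moreover have "2 \<le> level P lt a"
    using level_ge_1[OF \<open>a \<in> P\<close>] not_1 a by simp
  ultimately obtain q where q: "q \<in> P" "lt q a" "Suc (level P lt q) = level P lt a"
    by (rule level_predecessor)
  obtain j where j: "j < length Ys" "q \<in> Ys ! j"
    using compatible_listing_covers[OF cl q(1)] by blast
  show False
  proof (cases "j = 0")
    case True
    then show False
      using part_letter_spans_level[OF X] j q a by (fastforce simp: letter_spans_def)
  next
    case False
    then show False
      using compatible_listing_less_iff[OF cl j(1) _ False j(2) a(1)] assms q by simp
  qed
qed

lemma compatible_listing_adjacent_clone_rel:
  assumes cl: "compatible_listing P lt Ys" and k: "Suc k < length Ys"
    and a: "a \<in> Ys ! k" and b: "b \<in> Ys ! Suc k"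
    and flat: "\<And>x. x \<in> Ys ! k \<union> Ys ! Suc k \<Longrightarrow> level P lt x = i"
  shows "clone_rel P lt a b"
proof -
  have P: "a \<in> P" "b \<in> P"
    using a b part_subset compatible_listing_nth_part[OF cl] k by (meson Suc_lessD subsetD)+
  have "(lt x a \<longleftrightarrow> lt x b) \<and> (lt a x \<longleftrightarrow> lt b x)" if x: "x \<in> P" for x
  proof -
    obtain j where j: "j < length Ys" "x \<in> Ys ! j"
      using compatible_listing_covers[OF cl x] by blast
    show ?thesis
    proof (cases "j = k \<or> j = Suc k")
      case True
      then have "level P lt x = level P lt a" "level P lt x = level P lt b"
        using flat a b j by auto
      then show ?thesis
        using level_less_level x P by (metis less_irrefl)
    next
      case False
      then have "j < k \<longleftrightarrow> j < Suc k" "k < j \<longleftrightarrow> Suc k < j"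
        by auto
      then show ?thesis
        using compatible_listing_less_iff[OF cl j(1) _ _ j(2) a] compatible_listing_less_iff[OF cl j(1) k _ j(2) b]
          compatible_listing_less_iff[OF cl _ j(1) _ a j(2)] compatible_listing_less_iff[OF cl k j(1) _ b j(2)]
          False k flat a b by auto
    qed
  qed
  then show ?thesis
    unfolding clone_rel_def down_set_def up_set_def by blast
qed

lemma compatible_listing_no_adjacent_clone_letters:
  assumes cl: "compatible_listing P lt Ys" and k: "Suc k < length Ys"
    and "part_letter P lt (Ys ! k) = C i" "part_letter P lt (Ys ! Suc k) = C i"
  shows False
proof -
  have parts: "Ys ! k \<in> parts P lt" "Ys ! Suc k \<in> parts P lt"
    using compatible_listing_nth_part cl k by auto
  then have clones: "Ys ! k \<in> clone_sets P lt" "Ys ! Suc k \<in> clone_sets P lt"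
    using assms(3,4) unfolding parts_def part_letter_def by (auto split: if_splits)
  obtain a b where ab: "a \<in> Ys ! k" "b \<in> Ys ! Suc k"
    using clone_set_not_empty clones by blast
  have "level P lt x = i" if "x \<in> Ys ! k \<union> Ys ! Suc k" for x
    using part_letter_spans_level[OF parts(1)] part_letter_spans_level[OF parts(2)] that assms(3,4)
    by (fastforce simp: letter_spans_def)
  then have "clone_rel P lt a b"
    using compatible_listing_adjacent_clone_rel[OF cl k ab] by blast
  then have "Ys ! k = Ys ! Suc k"
    using clone_sets_eq_if_clone_rel clones ab by blast
  then show False
    using cl k by (simp add: compatible_listing_def nth_eq_iff_index_eq)
qed

lemma compatible_listing_swap_adjacent:
  assumes cl: "compatible_listing P lt Ys" and k: "Suc k < length Ys"
    and apart: "\<And>a b. a \<in> Ys ! k \<Longrightarrow> b \<in> Ys ! Suc k \<Longrightarrow>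
      level P lt a + 1 \<noteq> level P lt b \<and> level P lt b + 1 \<noteq> level P lt a"
  shows "compatible_listing P lt (Ys[k := Ys ! Suc k, Suc k := Ys ! k])"
    (is "compatible_listing P lt ?Ys'")
proof -
  define \<sigma> where "\<sigma> j = (if j = k then Suc k else if j = Suc k then k else j)" for j
  have nth: "?Ys' ! j = Ys ! \<sigma> j" if "j < length Ys" for j
    unfolding \<sigma>_def using that k by (auto simp: nth_list_update)
  have \<sigma>_less: "\<sigma> j < length Ys" if "j < length Ys" for j
    using that k unfolding \<sigma>_def by auto
  have \<sigma>_inj: "\<sigma> i \<noteq> \<sigma> j" if "i \<noteq> j" for i j
    using that unfolding \<sigma>_def by auto
  show ?thesis
    unfolding compatible_listing_def
  proof (intro conjI allI impI ballI)
    show "distinct ?Ys'" "set ?Ys' = parts P lt"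
      using cl k unfolding compatible_listing_def by simp_all
    fix i j a b
    assume ij: "i < length ?Ys'" "j < length ?Ys'" "i \<noteq> j" and a: "a \<in> ?Ys' ! i" and b: "b \<in> ?Ys' ! j"
    then have a': "a \<in> Ys ! \<sigma> i" and b': "b \<in> Ys ! \<sigma> j"
      using nth by auto
    have less: "lt a b \<longleftrightarrow> level P lt a + 2 \<le> level P lt b \<or> (level P lt a + 1 = level P lt b \<and> \<sigma> i < \<sigma> j)"
      using compatible_listing_less_iff[OF cl \<sigma>_less \<sigma>_less \<sigma>_inj[OF ij(3)] a' b'] ij by simp
    show "lt a b \<longleftrightarrow> level P lt a + 2 \<le> level P lt b \<or> (level P lt a + 1 = level P lt b \<and> i < j)"
    proof (cases "{i, j} = {k, Suc k}")
      case True
      then have "level P lt a + 1 \<noteq> level P lt b"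
        using apart a' b' unfolding \<sigma>_def by (auto simp: doubleton_eq_iff)
      then show ?thesis
        using less by auto
    next
      case False
      then have "\<sigma> i < \<sigma> j \<longleftrightarrow> i < j"
        using ij(3) unfolding \<sigma>_def by (auto simp: doubleton_eq_iff)
      then show ?thesis
        using less by simp
    qed
  qed
qed

lemma compatible_listing_swap_step:
  assumes cl: "compatible_listing P lt Ys" and "swap_step (listing_word P lt Ys) v"
  obtains Ys' where "compatible_listing P lt Ys'" "listing_word P lt Ys' = v"
proof -
  obtain u z x y where w: "map (part_letter P lt) Ys = u @ [x, y] @ z" and v: "v = u @ [y, x] @ z"
    and c: "commutes x y"
    using assms(2) unfolding swap_step_def listing_word_def by blast
  define k where "k = length u"
  have k: "Suc k < length Ys"
    using arg_cong[OF w, of length] unfolding k_def by simp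
  have letters: "part_letter P lt (Ys ! k) = x" "part_letter P lt (Ys ! Suc k) = y"
    using arg_cong[OF w, of "\<lambda>l. l ! k"] arg_cong[OF w, of "\<lambda>l. l ! Suc k"] k
    unfolding k_def by (simp_all add: nth_append)
  have parts: "Ys ! k \<in> parts P lt" "Ys ! Suc k \<in> parts P lt"
    using compatible_listing_nth_part[OF cl] k by auto
  have "level P lt a + 1 \<noteq> level P lt b \<and> level P lt b + 1 \<noteq> level P lt a"
    if "a \<in> Ys ! k" "b \<in> Ys ! Suc k" for a b
    using part_letter_spans_level[OF parts(1) that(1)] part_letter_spans_level[OF parts(2) that(2)]
      c letters by (auto simp: commutes_iff_apart letter_spans_def)
  then have "compatible_listing P lt (Ys[k := Ys ! Suc k, Suc k := Ys ! k])"
    using compatible_listing_swap_adjacent[OF cl k] by blast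
  moreover have "listing_word P lt (Ys[k := Ys ! Suc k, Suc k := Ys ! k]) = v"
  proof -
    have "listing_word P lt (Ys[k := Ys ! Suc k, Suc k := Ys ! k]) = (u @ [x, y] @ z)[k := y, Suc k := x]"
      using letters w by (simp add: listing_word_def map_update)
    also have "\<dots> = v"
      unfolding v k_def by (simp add: list_update_append)
    finally show ?thesis .
  qed
  ultimately show ?thesis
    using that by blast
qed

lemma skeleton_word_listing:
  assumes "is_skeleton P lt m" "w \<in> m"
  obtains Ys where "compatible_listing P lt Ys" "listing_word P lt Ys = w"
proof -
  obtain Xs where Xs: "compatible_listing P lt Xs" "trace_class (listing_word P lt Xs) = m"
    using assms(1) unfolding is_skeleton_def by blast
  have "swap_step\<^sup>*\<^sup>* (listing_word P lt Xs) w"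
    using assms(2) Xs(2) unfolding trace_class_def by blast
  then have "\<exists>Ys. compatible_listing P lt Ys \<and> listing_word P lt Ys = w"
  proof (induction rule: rtranclp_induct)
    case base
    then show ?case using Xs(1) by blast
  next
    case (step v v')
    then show ?case
      using compatible_listing_swap_step by metis
  qed
  then show ?thesis
    using that by blast
qed

lemma skeleton_word_first_letter:
  assumes "is_skeleton P lt m" "P \<noteq> {}" "w \<in> m"
  shows "\<exists>w'. w = C 1 # w' \<or> w = T 1 # w'"
proof -
  obtain Ys where Ys: "compatible_listing P lt Ys" "listing_word P lt Ys = w"
    using skeleton_word_listing[OF assms(1,3)] by blast
  obtain x where "x \<in> P"
    using assms(2) by blast
  then have "Ys \<noteq> []"
    using compatible_listing_covers[OF Ys(1)] by (metis length_0_conv not_less0)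
  then obtain Y Ys' where "Ys = Y # Ys'"
    by (cases Ys) auto
  moreover have "letter_low (part_letter P lt (Ys ! 0)) = 1"
    using compatible_listing_first_letter[OF Ys(1) \<open>Ys \<noteq> []\<close>] .
  ultimately show ?thesis
    using Ys(2) unfolding listing_word_def part_letter_def by (auto split: if_splits)
qed

lemma skeleton_word_no_CC:
  assumes "is_skeleton P lt m" "w \<in> m"
  shows "\<not> (\<exists>u v i. w = u @ [C i, C i] @ v)"
proof
  assume "\<exists>u v i. w = u @ [C i, C i] @ v"
  then obtain u v i where w: "w = u @ [C i, C i] @ v"
    by blast
  obtain Ys where Ys: "compatible_listing P lt Ys" "map (part_letter P lt) Ys = w"
    using skeleton_word_listing[OF assms] unfolding listing_word_def by blast
  have "Suc (length u) < length Ys"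
    using arg_cong[OF Ys(2), of length] w by simp
  moreover have "part_letter P lt (Ys ! length u) = C i" "part_letter P lt (Ys ! Suc (length u)) = C i"
    using arg_cong[OF Ys(2), of "\<lambda>l. l ! length u"] arg_cong[OF Ys(2), of "\<lambda>l. l ! Suc (length u)"]
      calculation w by (simp_all add: nth_append)
  ultimately show False
    using compatible_listing_no_adjacent_clone_letters[OF Ys(1)] by blast
qed

end

lemma swap_steps_move_letter:
  assumes "k < length w" "l \<le> k" "\<And>j. l \<le> j \<Longrightarrow> j < k \<Longrightarrow> commutes (w ! j) (w ! k)"
  shows "swap_step\<^sup>*\<^sup>* w (take l w @ w ! k # drop l (take k w) @ drop (Suc k) w)"
  using assms
proof (induction "k - l" arbitrary: l)
  case 0
  then show ?case
    by (simp add: id_take_nth_drop[symmetric])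
next
  case (Suc d)
  then have "l < k"
    by simp
  define R where "R = drop (Suc l) (take k w) @ drop (Suc k) w"
  have "swap_step\<^sup>*\<^sup>* w (take (Suc l) w @ w ! k # drop (Suc l) (take k w) @ drop (Suc k) w)"
    using Suc \<open>l < k\<close> by simp
  also have "take (Suc l) w @ w ! k # drop (Suc l) (take k w) @ drop (Suc k) w = take l w @ [w ! l, w ! k] @ R"
    unfolding R_def using \<open>l < k\<close> Suc.prems(1) by (simp add: take_Suc_conv_app_nth)
  also have "swap_step \<dots> (take l w @ [w ! k, w ! l] @ R)"
    unfolding swap_step_def using Suc.prems(3) \<open>l < k\<close> by blast
  also have "take l w @ [w ! k, w ! l] @ R = take l w @ w ! k # drop l (take k w) @ drop (Suc k) w"
    unfolding R_def using \<open>l < k\<close> Suc.prems(1) by (simp add: Cons_nth_drop_Suc[symmetric])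
  finally show ?case .
qed

lemma trace_class_move_letter:
  assumes "valid_word w" "k < length w" "l \<le> k" "\<And>j. l \<le> j \<Longrightarrow> j < k \<Longrightarrow> commutes (w ! j) (w ! k)"
  shows "take l w @ w ! k # drop l (take k w) @ drop (Suc k) w \<in> trace_class w"
proof -
  have "set (take l w @ w ! k # drop l (take k w) @ drop (Suc k) w) \<subseteq> set w"
    using assms(2) by (auto dest: in_set_takeD in_set_dropD)
  then show ?thesis
    using swap_steps_move_letter[OF assms(2-4)] assms(1)
    unfolding trace_class_def valid_word_def by blast
qed

lemma letter_low_ge_1: "valid_word w \<Longrightarrow> k < length w \<Longrightarrow> 1 \<le> letter_low (w ! k)"
  unfolding valid_word_def valid_letter_def by (cases "w ! k") (auto dest!: nth_mem)

definition grounded :: "letter list \<Rightarrow> bool" where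
  "grounded w \<longleftrightarrow> (\<forall>k<length w. letter_low (w ! k) = 1
     \<or> (\<exists>j<k. letter_spans (w ! j) (letter_low (w ! k) - 1)))"

definition clones_separated :: "letter list \<Rightarrow> bool" where
  "clones_separated w \<longleftrightarrow> (\<forall>i j k. j < k \<and> k < length w \<and> w ! j = C i \<and> w ! k = C i \<longrightarrow>
     (\<exists>l v. j < l \<and> l < k \<and> letter_spans (w ! l) v \<and> (v + 1 = i \<or> v = i + 1)))"

lemma grounded_prefix_spans:
  assumes grounded: "\<forall>j<k. letter_low (w ! j) = 1 \<or> (\<exists>j'<j. letter_spans (w ! j') (letter_low (w ! j) - 1))"
    and "j < k" "1 \<le> u" "u \<le> letter_high (w ! j)"
  shows "\<exists>j'\<le>j. letter_spans (w ! j') u"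
  using assms(2-4)
proof (induction j arbitrary: u rule: less_induct)
  case (less j)
  show ?case
  proof (cases "letter_low (w ! j) \<le> u")
    case True
    then show ?thesis
      using less.prems by (auto simp: letter_spans_def)
  next
    case False
    then obtain j' where j': "j' < j" "letter_spans (w ! j') (letter_low (w ! j) - 1)"
      using grounded less.prems by fastforce
    then have "u \<le> letter_high (w ! j')"
      using False by (auto simp: letter_spans_def)
    then show ?thesis
      using less.IH[OF j'(1)] j'(1) less.prems by (meson order.strict_trans less_imp_le order.trans)
  qed
qed

text \<open>If the \<open>k\<close>-th letter had no support below it, it would commute with the whole prefix and
  could be moved to the front of the word.\<close>

lemma grounded_if_trace_class_starts_at_1:
  assumes valid: "valid_word w"
    and starts: "\<forall>v\<in>trace_class w. \<exists>v'. v = C 1 # v' \<or> v = T 1 # v'"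
  shows "grounded w"
  unfolding grounded_def
proof (intro allI impI)
  fix k assume "k < length w"
  then show "letter_low (w ! k) = 1 \<or> (\<exists>j<k. letter_spans (w ! j) (letter_low (w ! k) - 1))"
  proof (induction k rule: less_induct)
    case (less k)
    show ?case
    proof (rule ccontr)
      assume unsupported: "\<not> ?case"
      define i where "i = letter_low (w ! k)"
      have "2 \<le> i"
        using unsupported letter_low_ge_1[OF valid less.prems] unfolding i_def by simp
      have prefix: "\<forall>j<k. letter_low (w ! j) = 1 \<or> (\<exists>j'<j. letter_spans (w ! j') (letter_low (w ! j) - 1))"
        using less.IH less.prems by simp
      have "letter_high (w ! j) + 2 \<le> i" if jk: "j < k" for j
      proof (rule ccontr)
        assume "\<not> letter_high (w ! j) + 2 \<le> i"
        then have "1 \<le> i - 1" "i - 1 \<le> letter_high (w ! j)"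
          using \<open>2 \<le> i\<close> by linarith+
        then obtain j' where "j' \<le> j" "letter_spans (w ! j') (i - 1)"
          using grounded_prefix_spans[OF prefix jk] by blast
        then show False
          using unsupported jk unfolding i_def by (meson le_less_trans)
      qed
      then have "commutes (w ! j) (w ! k)" if "j < k" for j
        using that by (simp add: commutes_iff_apart i_def)
      then have "w ! k # take k w @ drop (Suc k) w \<in> trace_class w"
        using trace_class_move_letter[OF valid less.prems, of 0] by simp
      then obtain v' where "w ! k # take k w @ drop (Suc k) w = C 1 # v' \<or> w ! k # take k w @ drop (Suc k) w = T 1 # v'"
        using starts by blast
      then have "i = 1"
        unfolding i_def by auto
      then show False
        using \<open>2 \<le> i\<close> by simp
    qed
  qed
qed

text \<open>Without a separating letter, every letter between two occurrences of \<open>c\<^sub>i\<close> commutes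
  with \<open>c\<^sub>i\<close>, so the two occurrences could be brought together.\<close>

lemma clones_separated_if_trace_class_no_CC:
  assumes valid: "valid_word w"
    and no_CC: "\<forall>v\<in>trace_class w. \<not> (\<exists>u v' i. 1 \<le> i \<and> v = u @ [C i, C i] @ v')"
  shows "clones_separated w"
  unfolding clones_separated_def
proof (intro allI impI, elim conjE)
  fix i j k
  assume "j < k" "k < length w" "w ! j = C i" "w ! k = C i"
  then show "\<exists>l v. j < l \<and> l < k \<and> letter_spans (w ! l) v \<and> (v + 1 = i \<or> v = i + 1)"
  proof (induction k rule: less_induct)
    case (less k)
    show ?case
    proof (cases "\<exists>l. j < l \<and> l < k \<and> w ! l = C i")
      case True
      then obtain l where l: "j < l" "l < k" "w ! l = C i"
        by blast
      then show ?thesis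
        using less.IH[of l] less.prems by fastforce
    next
      case False
      show ?thesis
      proof (rule ccontr)
        assume unseparated: "\<not> ?thesis"
        have "commutes (w ! l) (w ! k)" if "Suc j \<le> l" "l < k" for l
        proof -
          have far: "\<not> letter_spans (w ! l) v" if "v + 1 = i \<or> v = i + 1" for v
            using unseparated \<open>Suc j \<le> l\<close> \<open>l < k\<close> that by auto
          have "w ! l \<noteq> C i"
            using False that by auto
          then have "letter_high (w ! l) + 2 \<le> i \<or> i + 2 \<le> letter_low (w ! l)"
          proof (cases "w ! l")
            case (C a)
            then show ?thesis
              using far[of a] \<open>w ! l \<noteq> C i\<close> by (fastforce simp: letter_spans_def)
          next
            case (T a)
            then show ?thesis
              using far[of a] far[of "Suc a"] by (fastforce simp: letter_spans_def)
          qed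
          then show ?thesis
            using less.prems(4) by (simp add: commutes_iff_apart)
        qed
        then have "take (Suc j) w @ w ! k # drop (Suc j) (take k w) @ drop (Suc k) w \<in> trace_class w"
          using trace_class_move_letter[OF valid less.prems(2), of "Suc j"] less.prems(1) by auto
        moreover have "take (Suc j) w @ w ! k # drop (Suc j) (take k w) @ drop (Suc k) w
          = take j w @ [C i, C i] @ (drop (Suc j) (take k w) @ drop (Suc k) w)"
          using less.prems by (simp add: take_Suc_conv_app_nth)
        moreover have "1 \<le> i"
          using letter_low_ge_1[OF valid less.prems(2)] less.prems(4) by simp
        ultimately show False
          using no_CC by blast
      qed
    qed
  qed
qed

section \<open>The poset of a word\<close>

text \<open>Element \<open>e\<close> sits in slot \<open>e mod 4\<close> of position \<open>e div 4\<close> of the word. A letter \<open>c\<^sub>i\<close>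
  contributes slot 0 on level \<open>i\<close>; a letter \<open>t\<^sub>i\<^sub>,\<^sub>i\<^sub>+\<^sub>1\<close> contributes the bottom slots 0, 1 on
  level \<open>i\<close> and the top slots 2, 3 on level \<open>i + 1\<close>, with \<open>0 < 2\<close> and \<open>1 < 3\<close>.\<close>

definition position :: "nat \<Rightarrow> nat" where
  "position e = e div 4"

definition slot :: "nat \<Rightarrow> nat" where
  "slot e = e mod 4"

lemma position_slot_simps [simp]:
  "position (4 * k) = k" "position (Suc (4 * k)) = k"
  "position (Suc (Suc (4 * k))) = k" "position (Suc (Suc (Suc (4 * k)))) = k"
  "slot (4 * k) = 0" "slot (Suc (4 * k)) = 1"
  "slot (Suc (Suc (4 * k))) = 2" "slot (Suc (Suc (Suc (4 * k)))) = 3"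
  unfolding position_def slot_def by presburger+

lemma position_slot_add [simp]: "s < 4 \<Longrightarrow> position (4 * k + s) = k" "s < 4 \<Longrightarrow> slot (4 * k + s) = s"
  unfolding position_def slot_def by simp_all

lemma position_slot_decomp: "e = 4 * position e + slot e"
  unfolding position_def slot_def by simp

lemma slot_less_4: "slot e < 4"
  unfolding slot_def by simp

lemma top_slots: "position x = k \<Longrightarrow> 2 \<le> slot x \<Longrightarrow> x \<in> {4 * k + 2, 4 * k + 3}"
  using position_slot_decomp[of x] slot_less_4[of x] by auto

lemma bottom_slots: "position x = k \<Longrightarrow> slot x < 2 \<Longrightarrow> x \<in> {4 * k, 4 * k + 1}"
  using position_slot_decomp[of x] by auto

fun is_tangle_letter :: "letter \<Rightarrow> bool" where
  "is_tangle_letter (C i) = False"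
| "is_tangle_letter (T i) = True"

definition slot_count :: "letter list \<Rightarrow> nat \<Rightarrow> nat" where
  "slot_count w k = (if is_tangle_letter (w ! k) then 4 else 1)"

definition word_poset :: "letter list \<Rightarrow> nat set" where
  "word_poset w = {e. position e < length w \<and> slot e < slot_count w (position e)}"

definition word_level :: "letter list \<Rightarrow> nat \<Rightarrow> nat" where
  "word_level w e = letter_low (w ! position e) + (if 2 \<le> slot e then 1 else 0)"

definition word_less :: "letter list \<Rightarrow> nat \<Rightarrow> nat \<Rightarrow> bool" where
  "word_less w p q \<longleftrightarrow> p \<in> word_poset w \<and> q \<in> word_poset w \<and>
     ((position p \<noteq> position q \<and> (word_level w p + 2 \<le> word_level w q
        \<or> (word_level w p + 1 = word_level w q \<and> position p < position q)))
      \<or> (position p = position q \<and> ((slot p = 0 \<and> slot q = 2) \<or> (slot p = 1 \<and> slot q = 3))))"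

definition word_part :: "letter list \<Rightarrow> nat \<Rightarrow> nat set" where
  "word_part w k = {e \<in> word_poset w. position e = k}"

definition word_listing :: "letter list \<Rightarrow> nat set list" where
  "word_listing w = map (word_part w) [0..<length w]"

lemma finite_word_poset: "finite (word_poset w)"
proof -
  have "word_poset w \<subseteq> {..< 4 * length w}"
    by (auto simp: word_poset_def position_def)
  then show ?thesis
    using finite_subset by blast
qed

lemma mem_word_poset: "k < length w \<Longrightarrow> s < slot_count w k \<Longrightarrow> 4 * k + s \<in> word_poset w"
  unfolding word_poset_def slot_count_def position_def slot_def by (auto split: if_splits)

lemma is_tangle_letter_if_slot_ge_1:
  "e \<in> word_poset w \<Longrightarrow> 1 \<le> slot e \<Longrightarrow> is_tangle_letter (w ! position e)"
  unfolding word_poset_def slot_count_def by (auto split: if_splits)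

lemma word_level_less: "word_less w p q \<Longrightarrow> word_level w p < word_level w q"
  unfolding word_less_def word_level_def by auto

lemma word_level_same_position: "position p = position q \<Longrightarrow> word_level w p \<le> word_level w q + 1"
  unfolding word_level_def by auto

lemma word_less_if_level_add_2_le:
  "p \<in> word_poset w \<Longrightarrow> q \<in> word_poset w \<Longrightarrow> word_level w p + 2 \<le> word_level w q \<Longrightarrow> word_less w p q"
  unfolding word_less_def using word_level_same_position[of q p w] by auto

lemma position_le_if_word_less:
  "word_less w p q \<Longrightarrow> word_level w p + 1 = word_level w q \<Longrightarrow> position p \<le> position q"
  unfolding word_less_def by auto

lemma position_le_if_not_word_less:
  "p \<in> word_poset w \<Longrightarrow> q \<in> word_poset w \<Longrightarrow> \<not> word_less w p q \<Longrightarrow>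
    word_level w p + 1 = word_level w q \<Longrightarrow> position q \<le> position p"
  unfolding word_less_def by auto

lemma finite_poset_word_poset: "finite_poset (word_poset w) (word_less w)"
  unfolding finite_poset_def
proof (intro conjI ballI impI)
  show "finite (word_poset w)"
    by (rule finite_word_poset)
  show "\<not> word_less w a a" for a
    using word_level_less by blast
  show "word_less w a c" if "a \<in> word_poset w" "c \<in> word_poset w" "word_less w a b \<and> word_less w b c" for a b c
    using that word_level_less[of w a b] word_level_less[of w b c] word_less_if_level_add_2_le by fastforce
qed

text \<open>In a \<open>3 + 1\<close> the levels of \<open>a < b < c\<close> and of \<open>d\<close> are forced to be \<open>\<ell>, \<ell> + 1, \<ell> + 2\<close> and
  \<open>\<ell> + 1\<close>; the position rules then give \<open>pos a \<le> pos b \<le> pos c \<le> pos d \<le> pos a\<close>, but a single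
  position spans only two levels.\<close>

lemma free31_word_poset: "free31 (word_poset w) (word_less w)"
  unfolding free31_def
proof (intro notI, elim bexE conjE)
  fix a b c d
  assume P: "a \<in> word_poset w" "b \<in> word_poset w" "c \<in> word_poset w" "d \<in> word_poset w"
    and ab: "word_less w a b" and bc: "word_less w b c"
    and "incomp (word_less w) d a" "incomp (word_less w) d c"
  then have not_less: "\<not> word_less w d a" "\<not> word_less w a d" "\<not> word_less w d c" "\<not> word_less w c d"
    unfolding incomp_def by auto
  then have "\<not> word_level w d + 2 \<le> word_level w a" "\<not> word_level w a + 2 \<le> word_level w d"
    "\<not> word_level w d + 2 \<le> word_level w c" "\<not> word_level w c + 2 \<le> word_level w d"
    using word_less_if_level_add_2_le P by blast+
  then have levels: "word_level w a + 1 = word_level w b" "word_level w b + 1 = word_level w c"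
    "word_level w a + 1 = word_level w d" "word_level w d + 1 = word_level w c"
    using word_level_less[OF ab] word_level_less[OF bc] by auto
  have "position a \<le> position b" "position b \<le> position c"
    using position_le_if_word_less ab bc levels by auto
  moreover have "position d \<le> position a" "position c \<le> position d"
    using position_le_if_not_word_less P not_less levels by auto
  ultimately have "position a = position c"
    by auto
  then show False
    using word_level_same_position[of c a w] levels by simp
qed

lemma position_less_length: "e \<in> word_poset w \<Longrightarrow> position e < length w"
  by (simp add: word_poset_def)

lemma slot_0_mem: "k < length w \<Longrightarrow> 4 * k \<in> word_poset w"
  using mem_word_poset[of k w 0] by (simp add: slot_count_def)

lemma tangle_slots_mem:
  assumes "k < length w" "is_tangle_letter (w ! k)"
  shows "4 * k \<in> word_poset w" "4 * k + 1 \<in> word_poset w"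
    "4 * k + 2 \<in> word_poset w" "4 * k + 3 \<in> word_poset w"
  using mem_word_poset[OF assms(1), of 0] mem_word_poset[OF assms(1), of 1]
    mem_word_poset[OF assms(1), of 2] mem_word_poset[OF assms(1), of 3] assms(2)
  by (simp_all add: slot_count_def)

lemma slot_0_if_clone_letter:
  "e \<in> word_poset w \<Longrightarrow> \<not> is_tangle_letter (w ! position e) \<Longrightarrow> slot e = 0"
  by (simp add: word_poset_def slot_count_def)

lemma element_at_level:
  assumes "l < length w" "letter_spans (w ! l) v"
  obtains e where "e \<in> word_poset w" "position e = l" "word_level w e = v"
proof (cases "v = letter_low (w ! l)")
  case True
  then show ?thesis
    using that[of "4 * l"] slot_0_mem[OF assms(1)] by (simp add: word_level_def)
next
  case False
  then have "is_tangle_letter (w ! l)" "v = letter_low (w ! l) + 1"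
    using assms(2) by (cases "w ! l"; auto simp: letter_spans_def)+
  then show ?thesis
    using that[of "4 * l + 2"] tangle_slots_mem[OF assms(1)] by (simp add: word_level_def)
qed

locale skeleton_word =
  fixes w :: "letter list"
  assumes valid: "valid_word w"
    and grounded: "grounded w"
    and separated: "clones_separated w"

sublocale skeleton_word \<subseteq> free31_poset "word_poset w" "word_less w"
  using finite_poset_word_poset free31_word_poset by unfold_locales

context skeleton_word
begin

abbreviation Pw :: "nat set" where
  "Pw \<equiv> word_poset w"

abbreviation ltw :: "nat \<Rightarrow> nat \<Rightarrow> bool" where
  "ltw \<equiv> word_less w"

lemma word_level_predecessor:
  assumes e: "e \<in> Pw" "2 \<le> word_level w e"
  shows "\<exists>q\<in>Pw. ltw q e \<and> Suc (word_level w q) = word_level w e"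
proof (cases "2 \<le> slot e")
  case True
  define q where "q = 4 * position e + (slot e - 2)"
  have q: "position q = position e" "slot q = slot e - 2"
    using slot_less_4[of e] unfolding q_def by (simp_all add: position_slot_add)
  have "q \<in> Pw"
    using e(1) True slot_less_4[of e] is_tangle_letter_if_slot_ge_1[OF e(1)] unfolding q_def
    by (intro mem_word_poset) (auto simp: word_poset_def slot_count_def)
  moreover have "ltw q e"
    using calculation e(1) True q slot_less_4[of e] by (auto simp: word_less_def)
  moreover have "Suc (word_level w q) = word_level w e"
    using True q slot_less_4[of e] by (simp add: word_level_def)
  ultimately show ?thesis
    by blast
next
  case False
  define k where "k = position e"
  have k: "k < length w" and level: "word_level w e = letter_low (w ! k)"
    using e(1) False unfolding k_def by (auto simp: word_poset_def word_level_def)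
  then obtain j where j: "j < k" "letter_spans (w ! j) (letter_low (w ! k) - 1)"
    using grounded e(2) unfolding grounded_def by fastforce
  moreover have "j < length w"
    using j k by simp
  ultimately obtain q where q: "q \<in> Pw" "position q = j" "word_level w q = letter_low (w ! k) - 1"
    using element_at_level by blast
  then have "ltw q e"
    using e level j k_def by (auto simp: word_less_def)
  then show ?thesis
    using q e(2) level by auto
qed

lemma level_word_poset: "e \<in> Pw \<Longrightarrow> level Pw ltw e = word_level w e"
proof (rule level_eqI)
  show "1 \<le> word_level w x" if "x \<in> Pw" for x
    using letter_low_ge_1[OF valid position_less_length[OF that]] by (simp add: word_level_def)
qed (auto intro: word_level_less word_level_predecessor)

lemma word_level_eq_same_position:
  "position p = position q \<Longrightarrow> word_level w p = word_level w q \<longleftrightarrow> (2 \<le> slot p \<longleftrightarrow> 2 \<le> slot q)"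
  unfolding word_level_def by auto

lemma down_set_subset_if_position_less:
  assumes "p \<in> Pw" "q \<in> Pw" "word_level w p = word_level w q" "position p < position q"
  shows "down_set Pw ltw p \<subseteq> down_set Pw ltw q"
proof
  fix x assume "x \<in> down_set Pw ltw p"
  then have x: "x \<in> Pw" "ltw x p"
    by (auto simp: down_set_def)
  show "x \<in> down_set Pw ltw q"
  proof (cases "word_level w x + 2 \<le> word_level w q")
    case True
    then show ?thesis
      using word_less_if_level_add_2_le x(1) assms(2) by (auto simp: down_set_def)
  next
    case False
    then have "word_level w x + 1 = word_level w p"
      using word_level_less[OF x(2)] assms(3) by simp
    moreover from this have "position x \<le> position p"
      using position_le_if_word_less x(2) by blast
    ultimately show ?thesis
      using x(1) assms by (auto simp: down_set_def word_less_def)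
  qed
qed

lemma up_set_subset_if_position_less:
  assumes "p \<in> Pw" "q \<in> Pw" "word_level w p = word_level w q" "position p < position q"
  shows "up_set Pw ltw q \<subseteq> up_set Pw ltw p"
proof
  fix x assume "x \<in> up_set Pw ltw q"
  then have x: "x \<in> Pw" "ltw q x"
    by (auto simp: up_set_def)
  show "x \<in> up_set Pw ltw p"
  proof (cases "word_level w p + 2 \<le> word_level w x")
    case True
    then show ?thesis
      using word_less_if_level_add_2_le x(1) assms(1) by (auto simp: up_set_def)
  next
    case False
    then have "word_level w q + 1 = word_level w x"
      using word_level_less[OF x(2)] assms(3) by simp
    moreover from this have "position q \<le> position x"
      using position_le_if_word_less x(2) by blast
    ultimately show ?thesis
      using x(1) assms by (auto simp: up_set_def word_less_def)
  qed
qed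

lemma top_rel_word_poset:
  assumes "p \<in> Pw" "q \<in> Pw" "top_rel Pw ltw p q"
  shows "position p = position q \<and> 2 \<le> slot p \<and> 2 \<le> slot q"
proof -
  have level: "word_level w p = word_level w q"
    using level_eq_if_top_rel[OF assms] level_word_poset assms by simp
  then have same: "position p = position q"
    using down_set_subset_if_position_less[OF assms(1,2)] down_set_subset_if_position_less[OF assms(2,1)]
      assms(3) by (auto simp: top_rel_def) (meson linorder_neqE_nat)
  have "2 \<le> slot p"
  proof (rule ccontr)
    assume "\<not> 2 \<le> slot p"
    then have "down_set Pw ltw p = down_set Pw ltw q"
      using same level word_level_eq_same_position[OF same] assms(1,2)
      by (auto simp: down_set_def word_less_def)
    then show False
      using assms(3) by (simp add: top_rel_def)
  qed
  then show ?thesis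
    using same level word_level_eq_same_position[OF same] by auto
qed

lemma bot_rel_word_poset:
  assumes "p \<in> Pw" "q \<in> Pw" "bot_rel Pw ltw p q"
  shows "position p = position q \<and> slot p < 2 \<and> slot q < 2"
proof -
  have level: "word_level w p = word_level w q"
    using level_eq_if_bot_rel[OF assms] level_word_poset assms by simp
  then have same: "position p = position q"
    using up_set_subset_if_position_less[OF assms(1,2)] up_set_subset_if_position_less[OF assms(2,1)]
      assms(3) by (auto simp: bot_rel_def) (meson linorder_neqE_nat)
  have "slot p < 2"
  proof (rule ccontr)
    assume "\<not> slot p < 2"
    then have "up_set Pw ltw p = up_set Pw ltw q"
      using same level word_level_eq_same_position[OF same] assms(1,2)
      by (auto simp: up_set_def word_less_def)
    then show False
      using assms(3) by (simp add: bot_rel_def)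
  qed
  then show ?thesis
    using same level word_level_eq_same_position[OF same] by auto
qed

lemma component_top_rel_word_poset:
  assumes "a \<in> Pw"
  shows "component Pw (top_rel Pw ltw) a
    \<subseteq> (if 2 \<le> slot a then {4 * position a + 2, 4 * position a + 3} else {a})"
proof (cases "2 \<le> slot a")
  case True
  have "b \<in> {4 * position a + 2, 4 * position a + 3}" if "b \<in> component Pw (top_rel Pw ltw) a" for b
  proof (rule top_slots)
    show "position b = position a" "2 \<le> slot b"
      using component_invariant[OF that, of "\<lambda>x. (position x, 2 \<le> slot x)"] top_rel_word_poset True
      by auto
  qed
  then show ?thesis
    using True by auto
next
  case False
  then have "\<not> top_rel Pw ltw a y" if "y \<in> Pw" for y
    using top_rel_word_poset[OF assms that] by auto
  then show ?thesis
    using False component_subset_singleton[of Pw "top_rel Pw ltw" a] by simp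
qed

lemma component_bot_rel_word_poset:
  assumes "a \<in> Pw"
  shows "component Pw (bot_rel Pw ltw) a
    \<subseteq> (if slot a < 2 then {4 * position a, 4 * position a + 1} else {a})"
proof (cases "slot a < 2")
  case True
  have "b \<in> {4 * position a, 4 * position a + 1}" if "b \<in> component Pw (bot_rel Pw ltw) a" for b
  proof (rule bottom_slots)
    show "position b = position a" "slot b < 2"
      using component_invariant[OF that, of "\<lambda>x. (position x, slot x < 2)"] bot_rel_word_poset True
      by auto
  qed
  then show ?thesis
    using True by auto
next
  case False
  then have "\<not> bot_rel Pw ltw a y" if "y \<in> Pw" for y
    using bot_rel_word_poset[OF assms that] by auto
  then show ?thesis
    using False component_subset_singleton[of Pw "bot_rel Pw ltw" a] by simp
qed

lemma tangle_slots_less: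
  assumes "k < length w" "is_tangle_letter (w ! k)"
  shows "ltw (4 * k) (4 * k + 2)" "ltw (4 * k + 1) (4 * k + 3)"
    "\<not> ltw (4 * k) (4 * k + 3)" "\<not> ltw (4 * k + 1) (4 * k + 2)"
    "\<not> ltw (4 * k + 2) (4 * k + 3)" "\<not> ltw (4 * k + 3) (4 * k + 2)"
    "\<not> ltw (4 * k) (4 * k + 1)" "\<not> ltw (4 * k + 1) (4 * k)"
    "\<not> ltw (4 * k + 2) (4 * k)" "\<not> ltw (4 * k + 3) (4 * k + 1)"
    "\<not> ltw (4 * k + 2) (4 * k + 1)" "\<not> ltw (4 * k + 3) (4 * k)"
  using tangle_slots_mem[OF assms] unfolding word_less_def by (simp_all add: word_level_def)

lemma is_top_word_poset:
  "is_top Pw ltw A \<longleftrightarrow> (\<exists>k<length w. is_tangle_letter (w ! k) \<and> A = {4 * k + 2, 4 * k + 3})"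
proof
  assume "is_top Pw ltw A"
  then obtain a where a: "a \<in> Pw" "A = component Pw (top_rel Pw ltw) a" and card: "2 \<le> card A"
    by (auto simp: is_top_def)
  have slot: "2 \<le> slot a"
  proof (rule ccontr)
    assume "\<not> 2 \<le> slot a"
    then have "A \<subseteq> {a}"
      using component_top_rel_word_poset[OF a(1)] a(2) by simp
    then show False
      using card card_mono[of "{a}" A] by simp
  qed
  then have sub: "A \<subseteq> {4 * position a + 2, 4 * position a + 3}"
    using component_top_rel_word_poset[OF a(1)] a(2) by simp
  then have "A = {4 * position a + 2, 4 * position a + 3}"
    using card card_mono[OF _ sub] card_subset_eq[OF _ sub] by simp
  moreover have "is_tangle_letter (w ! position a)"
    using is_tangle_letter_if_slot_ge_1[OF a(1)] slot by simp
  ultimately show "\<exists>k<length w. is_tangle_letter (w ! k) \<and> A = {4 * k + 2, 4 * k + 3}"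
    using position_less_length[OF a(1)] by blast
next
  assume "\<exists>k<length w. is_tangle_letter (w ! k) \<and> A = {4 * k + 2, 4 * k + 3}"
  then obtain k where k: "k < length w" "is_tangle_letter (w ! k)" and A: "A = {4 * k + 2, 4 * k + 3}"
    by blast
  have "top_rel Pw ltw (4 * k + 2) (4 * k + 3)"
    using tangle_slots_mem[OF k] tangle_slots_less[OF k] unfolding top_rel_def down_set_def by blast
  then have "component Pw (top_rel Pw ltw) (4 * k + 2) = A"
    unfolding A using component_top_rel_word_poset[of "4 * k + 2"] tangle_slots_mem[OF k]
    by (intro component_eq_pairI) simp_all
  then show "is_top Pw ltw A"
    unfolding is_top_def using tangle_slots_mem[OF k] A by auto
qed

lemma is_bottom_word_poset:
  "is_bottom Pw ltw B \<longleftrightarrow> (\<exists>k<length w. is_tangle_letter (w ! k) \<and> B = {4 * k, 4 * k + 1})"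
proof
  assume "is_bottom Pw ltw B"
  then obtain b where b: "b \<in> Pw" "B = component Pw (bot_rel Pw ltw) b" and card: "2 \<le> card B"
    by (auto simp: is_bottom_def)
  have slot: "slot b < 2"
  proof (rule ccontr)
    assume "\<not> slot b < 2"
    then have "B \<subseteq> {b}"
      using component_bot_rel_word_poset[OF b(1)] b(2) by simp
    then show False
      using card card_mono[of "{b}" B] by simp
  qed
  then have sub: "B \<subseteq> {4 * position b, 4 * position b + 1}"
    using component_bot_rel_word_poset[OF b(1)] b(2) by simp
  then have B: "B = {4 * position b, 4 * position b + 1}"
    using card card_mono[OF _ sub] card_subset_eq[OF _ sub] by simp
  then have "4 * position b + 1 \<in> Pw"
    using b component_subset by blast
  then have "is_tangle_letter (w ! position b)"
    using is_tangle_letter_if_slot_ge_1[of "4 * position b + 1" w] by simp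
  then show "\<exists>k<length w. is_tangle_letter (w ! k) \<and> B = {4 * k, 4 * k + 1}"
    using B position_less_length[OF b(1)] by blast
next
  assume "\<exists>k<length w. is_tangle_letter (w ! k) \<and> B = {4 * k, 4 * k + 1}"
  then obtain k where k: "k < length w" "is_tangle_letter (w ! k)" and B: "B = {4 * k, 4 * k + 1}"
    by blast
  have "bot_rel Pw ltw (4 * k) (4 * k + 1)"
    using tangle_slots_mem[OF k] tangle_slots_less[OF k] unfolding bot_rel_def up_set_def by blast
  then have "component Pw (bot_rel Pw ltw) (4 * k) = B"
    unfolding B using component_bot_rel_word_poset[of "4 * k"] tangle_slots_mem[OF k]
    by (intro component_eq_pairI) simp_all
  then show "is_bottom Pw ltw B"
    unfolding is_bottom_def using tangle_slots_mem[OF k] B by auto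
qed

lemma matched_word_poset:
  assumes "j < length w" "is_tangle_letter (w ! j)" "k < length w" "is_tangle_letter (w ! k)"
  shows "matched ltw {4 * j + 2, 4 * j + 3} {4 * k, 4 * k + 1} \<longleftrightarrow> j = k"
proof
  assume "matched ltw {4 * j + 2, 4 * j + 3} {4 * k, 4 * k + 1}"
  then obtain a1 a2 b1 where ab: "a1 \<in> {4 * j + 2, 4 * j + 3}" "a2 \<in> {4 * j + 2, 4 * j + 3}"
    "b1 \<in> {4 * k, 4 * k + 1}" "ltw b1 a1" "\<not> ltw b1 a2"
    unfolding matched_def incomp_def by blast
  have "a1 \<in> Pw" "a2 \<in> Pw" "b1 \<in> Pw"
    using ab tangle_slots_mem assms by auto
  moreover have "position a1 = j" "position a2 = j" "position b1 = k" "word_level w a1 = word_level w a2"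
    using ab by (auto simp: word_level_def)
  ultimately show "j = k"
    using ab(4,5) unfolding word_less_def by auto
next
  assume "j = k"
  then show "matched ltw {4 * j + 2, 4 * j + 3} {4 * k, 4 * k + 1}"
    unfolding matched_def incomp_def using tangle_slots_less[OF assms(3,4)]
    by (intro bexI[of _ "4 * k + 2"] bexI[of _ "4 * k + 3"] bexI[of _ "4 * k"] bexI[of _ "4 * k + 1"]) auto
qed

lemma word_part_tangle_letter:
  assumes "k < length w" "is_tangle_letter (w ! k)"
  shows "word_part w k = {4 * k, 4 * k + 1} \<union> {4 * k + 2, 4 * k + 3}"
proof
  show "word_part w k \<subseteq> {4 * k, 4 * k + 1} \<union> {4 * k + 2, 4 * k + 3}"
  proof
    fix x assume "x \<in> word_part w k"
    then have "position x = k"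
      by (simp add: word_part_def)
    then show "x \<in> {4 * k, 4 * k + 1} \<union> {4 * k + 2, 4 * k + 3}"
      using top_slots[of x k] bottom_slots[of x k] by (metis UnI1 UnI2 not_le)
  qed
  show "{4 * k, 4 * k + 1} \<union> {4 * k + 2, 4 * k + 3} \<subseteq> word_part w k"
    using tangle_slots_mem[OF assms] by (simp add: word_part_def)
qed

lemma word_part_clone_letter:
  assumes "k < length w" "\<not> is_tangle_letter (w ! k)"
  shows "word_part w k = {4 * k}"
proof
  show "word_part w k \<subseteq> {4 * k}"
  proof
    fix x assume x: "x \<in> word_part w k"
    then have "position x = k" "slot x = 0"
      using assms(2) slot_0_if_clone_letter by (auto simp: word_part_def)
    then show "x \<in> {4 * k}"
      using position_slot_decomp[of x] by simp
  qed
  show "{4 * k} \<subseteq> word_part w k"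
    using slot_0_mem[OF assms(1)] by (simp add: word_part_def)
qed

lemma tangles_word_poset: "tangles Pw ltw = {word_part w k | k. k < length w \<and> is_tangle_letter (w ! k)}"
proof (intro equalityI subsetI)
  fix X assume "X \<in> tangles Pw ltw"
  then obtain A B where X: "X = A \<union> B" "is_top Pw ltw A" "is_bottom Pw ltw B" "matched ltw A B"
    unfolding tangles_def by blast
  obtain j where j: "j < length w" "is_tangle_letter (w ! j)" "A = {4 * j + 2, 4 * j + 3}"
    using X(2) unfolding is_top_word_poset by blast
  obtain k where k: "k < length w" "is_tangle_letter (w ! k)" "B = {4 * k, 4 * k + 1}"
    using X(3) unfolding is_bottom_word_poset by blast
  have "j = k"
    using matched_word_poset[OF j(1,2) k(1,2)] X(4) j(3) k(3) by simp
  then have "X = word_part w k"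
    using word_part_tangle_letter[OF k(1,2)] X(1) j(3) k(3) by auto
  then show "X \<in> {word_part w k | k. k < length w \<and> is_tangle_letter (w ! k)}"
    using k by blast
next
  fix X assume "X \<in> {word_part w k | k. k < length w \<and> is_tangle_letter (w ! k)}"
  then obtain k where k: "k < length w" "is_tangle_letter (w ! k)" and X: "X = word_part w k"
    by blast
  have "is_top Pw ltw {4 * k + 2, 4 * k + 3}" "is_bottom Pw ltw {4 * k, 4 * k + 1}"
    "matched ltw {4 * k + 2, 4 * k + 3} {4 * k, 4 * k + 1}"
    using is_top_word_poset[of "{4 * k + 2, 4 * k + 3}"] is_bottom_word_poset[of "{4 * k, 4 * k + 1}"]
      matched_word_poset[OF k k] k by auto
  moreover have "X = {4 * k + 2, 4 * k + 3} \<union> {4 * k, 4 * k + 1}"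
    using word_part_tangle_letter[OF k] X by auto
  ultimately show "X \<in> tangles Pw ltw"
    unfolding tangles_def by blast
qed

lemma in_tangle_word_poset:
  assumes "x \<in> Pw"
  shows "in_tangle Pw ltw x \<longleftrightarrow> is_tangle_letter (w ! position x)"
  using assms position_less_length[OF assms]
  by (auto simp: in_tangle_def tangles_word_poset word_part_def)

text \<open>By \<open>clones_separated\<close>, some element between two equal clone letters lies one level above or
  below them and is related to one of them but not to the other.\<close>

lemma not_clone_rel_if_position_less:
  assumes x: "x \<in> Pw" "\<not> is_tangle_letter (w ! position x)"
    and y: "y \<in> Pw" "\<not> is_tangle_letter (w ! position y)"
    and less: "position x < position y"
  shows "\<not> clone_rel Pw ltw x y"
proof
  assume clone: "clone_rel Pw ltw x y"
  have "level Pw ltw x = level Pw ltw y"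
    using level_eq_if_down_set_eq[OF x(1) y(1)] clone by (simp add: clone_rel_def)
  then have same_level: "word_level w x = word_level w y"
    using level_word_poset x(1) y(1) by simp
  obtain i where i: "w ! position x = C i"
    using x(2) by (cases "w ! position x") auto
  have levels: "word_level w x = i" "word_level w y = i"
    using i same_level slot_0_if_clone_letter[OF x] by (simp_all add: word_level_def)
  then have "w ! position y = C i"
    using y(2) slot_0_if_clone_letter[OF y] by (cases "w ! position y") (simp_all add: word_level_def)
  then obtain l v where l: "position x < l" "l < position y" "letter_spans (w ! l) v" "v + 1 = i \<or> v = i + 1"
    using separated i less position_less_length[OF y(1)] unfolding clones_separated_def by blast
  moreover have "l < length w"
    using l(2) position_less_length[OF y(1)] by simp
  ultimately obtain e where e: "e \<in> Pw" "position e = l" "word_level w e = v"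
    using element_at_level by blast
  show False
  proof (cases "v + 1 = i")
    case True
    then have "ltw e y" "\<not> ltw e x"
      using e x(1) y(1) l levels by (auto simp: word_less_def)
    then show False
      using clone e(1) unfolding clone_rel_def down_set_def by blast
  next
    case False
    then have "ltw x e" "\<not> ltw y e"
      using e x(1) y(1) l levels by (auto simp: word_less_def)
    then show False
      using clone e(1) unfolding clone_rel_def up_set_def by blast
  qed
qed

lemma clone_class_word_poset:
  assumes "x \<in> Pw" "\<not> is_tangle_letter (w ! position x)"
  shows "{y\<in>Pw. \<not> in_tangle Pw ltw y \<and> clone_rel Pw ltw x y} = {x}"
proof (intro equalityI subsetI)
  fix y assume "y \<in> {y\<in>Pw. \<not> in_tangle Pw ltw y \<and> clone_rel Pw ltw x y}"
  then have y: "y \<in> Pw" "\<not> is_tangle_letter (w ! position y)" and clone: "clone_rel Pw ltw x y"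
    using in_tangle_word_poset by auto
  then have "clone_rel Pw ltw y x"
    by (simp add: clone_rel_def)
  then have "position x = position y"
    using not_clone_rel_if_position_less[OF assms y] not_clone_rel_if_position_less[OF y assms] clone
    by (meson linorder_neqE_nat)
  moreover have "slot x = 0" "slot y = 0"
    using assms y slot_0_if_clone_letter by auto
  ultimately show "y \<in> {x}"
    using position_slot_decomp[of x] position_slot_decomp[of y] by simp
next
  fix y assume "y \<in> {x}"
  then show "y \<in> {y\<in>Pw. \<not> in_tangle Pw ltw y \<and> clone_rel Pw ltw x y}"
    using assms in_tangle_word_poset by (simp add: clone_rel_def)
qed

lemma clone_sets_word_poset:
  "clone_sets Pw ltw = {word_part w k | k. k < length w \<and> \<not> is_tangle_letter (w ! k)}"
proof (intro equalityI subsetI)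
  fix X assume "X \<in> clone_sets Pw ltw"
  then obtain x where x: "x \<in> Pw" "\<not> in_tangle Pw ltw x"
    and X: "X = {y\<in>Pw. \<not> in_tangle Pw ltw y \<and> clone_rel Pw ltw x y}"
    unfolding clone_sets_def by blast
  have clone_letter: "\<not> is_tangle_letter (w ! position x)"
    using x in_tangle_word_poset by simp
  then have "x = 4 * position x"
    using slot_0_if_clone_letter[OF x(1)] position_slot_decomp[of x] by simp
  then have "X = word_part w (position x)"
    using clone_class_word_poset[OF x(1) clone_letter] X
      word_part_clone_letter[OF position_less_length[OF x(1)] clone_letter] by simp
  then show "X \<in> {word_part w k | k. k < length w \<and> \<not> is_tangle_letter (w ! k)}"
    using position_less_length[OF x(1)] clone_letter by blast
next
  fix X assume "X \<in> {word_part w k | k. k < length w \<and> \<not> is_tangle_letter (w ! k)}"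
  then obtain k where k: "k < length w" "\<not> is_tangle_letter (w ! k)" and X: "X = word_part w k"
    by blast
  have "4 * k \<in> Pw" "\<not> in_tangle Pw ltw (4 * k)"
    using slot_0_mem[OF k(1)] in_tangle_word_poset k by simp_all
  moreover have "X = {y\<in>Pw. \<not> in_tangle Pw ltw y \<and> clone_rel Pw ltw (4 * k) y}"
    using clone_class_word_poset[of "4 * k"] calculation(1) k X word_part_clone_letter[OF k] by simp
  ultimately show "X \<in> clone_sets Pw ltw"
    unfolding clone_sets_def by blast
qed

lemma parts_word_poset: "parts Pw ltw = set (word_listing w)"
  unfolding parts_def tangles_word_poset clone_sets_word_poset word_listing_def by auto

lemma mem_word_part_iff: "e \<in> word_part w k \<longleftrightarrow> e \<in> Pw \<and> position e = k"
  by (simp add: word_part_def)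

lemma word_part_inject: "k < length w \<Longrightarrow> word_part w k = word_part w j \<Longrightarrow> k = j"
  using slot_0_mem[of k] by (metis mem_word_part_iff position_slot_simps(1))

lemma part_letter_word_part:
  assumes "k < length w"
  shows "part_letter Pw ltw (word_part w k) = w ! k"
proof -
  have "Min (level Pw ltw ` word_part w k) = letter_low (w ! k)"
  proof (rule Min_eqI)
    show "finite (level Pw ltw ` word_part w k)"
      using finite_word_poset[of w] by (simp add: word_part_def)
    show "letter_low (w ! k) \<in> level Pw ltw ` word_part w k"
      using slot_0_mem[OF assms] level_word_poset[OF slot_0_mem[OF assms]]
      by (force simp: word_level_def mem_word_part_iff)
    show "letter_low (w ! k) \<le> y" if "y \<in> level Pw ltw ` word_part w k" for y
      using that level_word_poset by (auto simp: word_level_def mem_word_part_iff)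
  qed
  moreover have "word_part w k \<in> tangles Pw ltw \<longleftrightarrow> is_tangle_letter (w ! k)"
    using assms word_part_inject by (auto simp: tangles_word_poset)
  ultimately show ?thesis
    by (cases "w ! k") (simp_all add: part_letter_def)
qed

lemma compatible_listing_word_listing: "compatible_listing Pw ltw (word_listing w)"
  unfolding compatible_listing_def
proof (intro conjI allI impI ballI)
  show "distinct (word_listing w)"
    unfolding word_listing_def distinct_map
    by (auto intro!: inj_onI word_part_inject)
  show "set (word_listing w) = parts Pw ltw"
    using parts_word_poset by simp
  fix i j a b
  assume "i < length (word_listing w)" "j < length (word_listing w)" "i \<noteq> j"
    and "a \<in> word_listing w ! i" "b \<in> word_listing w ! j"
  then have "position a = i" "a \<in> Pw" "position b = j" "b \<in> Pw" "i \<noteq> j"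
    by (auto simp: word_listing_def mem_word_part_iff)
  then show "ltw a b \<longleftrightarrow> level Pw ltw a + 2 \<le> level Pw ltw b
      \<or> (level Pw ltw a + 1 = level Pw ltw b \<and> i < j)"
    by (simp add: word_less_def level_word_poset)
qed

lemma is_skeleton_word_poset: "is_skeleton Pw ltw (trace_class w)"
proof -
  have "listing_word Pw ltw (word_listing w) = w"
    unfolding listing_word_def word_listing_def by (rule nth_equalityI) (auto simp: part_letter_word_part)
  then show ?thesis
    unfolding is_skeleton_def using compatible_listing_word_listing by metis
qed

end

theorem theorem3p11:
  assumes "m \<in> monoid_M"
  shows "(\<exists>P lt. finite_poset P lt \<and> P \<noteq> {} \<and> free31 P lt \<and> is_skeleton P lt m) \<longleftrightarrow>
         ((\<forall>w\<in>m. \<exists>w'. w = C 1 # w' \<or> w = T 1 # w') \<and>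
          (\<forall>w\<in>m. \<not> (\<exists>u v i. i \<ge> 1 \<and> w = u @ [C i, C i] @ v)))"
proof
  assume "\<exists>P lt. finite_poset P lt \<and> P \<noteq> {} \<and> free31 P lt \<and> is_skeleton P lt m"
  then obtain P lt where "finite_poset P lt" "free31 P lt" "P \<noteq> {}" "is_skeleton P lt m"
    by blast
  then interpret free31_poset P lt
    by unfold_locales
  show "(\<forall>w\<in>m. \<exists>w'. w = C 1 # w' \<or> w = T 1 # w') \<and>
        (\<forall>w\<in>m. \<not> (\<exists>u v i. i \<ge> 1 \<and> w = u @ [C i, C i] @ v))"
    using skeleton_word_first_letter skeleton_word_no_CC \<open>P \<noteq> {}\<close> \<open>is_skeleton P lt m\<close> by blast
next
  assume conditions: "(\<forall>w\<in>m. \<exists>w'. w = C 1 # w' \<or> w = T 1 # w') \<and>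
    (\<forall>w\<in>m. \<not> (\<exists>u v i. i \<ge> 1 \<and> w = u @ [C i, C i] @ v))"
  obtain w where w: "valid_word w" "m = trace_class w"
    using assms unfolding monoid_M_def by blast
  interpret skeleton_word w
    using w conditions grounded_if_trace_class_starts_at_1 clones_separated_if_trace_class_no_CC
    by unfold_locales auto
  have "w \<in> m"
    using w by (simp add: trace_class_def)
  then have "w \<noteq> []"
    using conditions by auto
  then have "word_poset w \<noteq> {}"
    using slot_0_mem[of 0] by auto
  then show "\<exists>P lt. finite_poset P lt \<and> P \<noteq> {} \<and> free31 P lt \<and> is_skeleton P lt m"
    using finite_poset_word_poset free31_word_poset is_skeleton_word_poset w(2) by blast
qed

end
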